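(* (Provably in $\mathsf{Z}^-_{\mathrm{FTM}\omega}$.) For any set $X$, the finite closure $\mathrm{PC}(X)$ and the transitive closure $\mathrm{TC}(X)$ exist as sets.
   Context: $\mathsf{Z}^-_{\mathrm{FTM}\omega}$ is Zermelo set theory without Power Set and Choice (Extensionality, Pairing, Union, Infinity, Regularity, Separation) plus: (FC) every set $X$ has a superset $Y$ such that every finite $x\subseteq Y$ belongs to $Y$; (TS) every set has a transitive superset; (MC) every set binary relation $A$ that is well-founded and extensional admits a transitive set $X$ and a bijection $\eta$ from its field onto $X$ with $jAk\iff\eta(j)\in\eta(k)$; (Count) every set admits an injection into $\omega$. A set $Y$ is finite-subset closed if every finite $x\subseteq Y$ belongs to $Y$. $\mathrm{PC}(X)$ is the $\subseteq$-least finite-subset closed superset of $X$, and $\mathrm{TC}(X)$ is the $\subseteq$-least transitive superset of $X$. *)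

theory Defs
  imports Main
begin

text \<open>A model of set theory is a membership relation M on a type 'a (M x y means x is an
element of y). By Goedel completeness, "provable in the theory T" is rendered as
"true in every model of T".\<close>

datatype fm = FMem nat nat | FEq nat nat | FNeg fm | FConj fm fm | FEx nat fm

fun sat :: "('a \<Rightarrow> 'a \<Rightarrow> bool) \<Rightarrow> (nat \<Rightarrow> 'a) \<Rightarrow> fm \<Rightarrow> bool" where
  "sat M e (FMem i j) = M (e i) (e j)"
| "sat M e (FEq i j) = (e i = e j)"
| "sat M e (FNeg p) = (\<not> sat M e p)"
| "sat M e (FConj p q) = (sat M e p \<and> sat M e q)"
| "sat M e (FEx v p) = (\<exists>x. sat M (e(v := x)) p)"

definition sub :: "('a \<Rightarrow> 'a \<Rightarrow> bool) \<Rightarrow> 'a \<Rightarrow> 'a \<Rightarrow> bool" where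
  "sub M x y \<longleftrightarrow> (\<forall>z. M z x \<longrightarrow> M z y)"

definition is_empty :: "('a \<Rightarrow> 'a \<Rightarrow> bool) \<Rightarrow> 'a \<Rightarrow> bool" where
  "is_empty M x \<longleftrightarrow> (\<forall>z. \<not> M z x)"

definition transitive_set :: "('a \<Rightarrow> 'a \<Rightarrow> bool) \<Rightarrow> 'a \<Rightarrow> bool" where
  "transitive_set M y \<longleftrightarrow> (\<forall>z. M z y \<longrightarrow> sub M z y)"

definition is_pair :: "('a \<Rightarrow> 'a \<Rightarrow> bool) \<Rightarrow> 'a \<Rightarrow> 'a \<Rightarrow> 'a \<Rightarrow> bool" where
  "is_pair M p a b \<longleftrightarrow>
     (\<forall>z. M z p \<longleftrightarrow> ((\<forall>u. M u z \<longleftrightarrow> u = a) \<or> (\<forall>u. M u z \<longleftrightarrow> u = a \<or> u = b)))"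

definition is_succ :: "('a \<Rightarrow> 'a \<Rightarrow> bool) \<Rightarrow> 'a \<Rightarrow> 'a \<Rightarrow> bool" where
  "is_succ M x s \<longleftrightarrow> (\<forall>z. M z s \<longleftrightarrow> M z x \<or> z = x)"

definition ind_set :: "('a \<Rightarrow> 'a \<Rightarrow> bool) \<Rightarrow> 'a \<Rightarrow> bool" where
  "ind_set M y \<longleftrightarrow> (\<exists>e. is_empty M e \<and> M e y) \<and>
     (\<forall>x s. M x y \<longrightarrow> is_succ M x s \<longrightarrow> M s y)"

definition is_omega :: "('a \<Rightarrow> 'a \<Rightarrow> bool) \<Rightarrow> 'a \<Rightarrow> bool" where
  "is_omega M w \<longleftrightarrow> ind_set M w \<and> (\<forall>y. ind_set M y \<longrightarrow> sub M w y)"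

definition ap :: "('a \<Rightarrow> 'a \<Rightarrow> bool) \<Rightarrow> 'a \<Rightarrow> 'a \<Rightarrow> 'a \<Rightarrow> bool" where
  "ap M f a b \<longleftrightarrow> (\<exists>p. M p f \<and> is_pair M p a b)"

definition is_fun :: "('a \<Rightarrow> 'a \<Rightarrow> bool) \<Rightarrow> 'a \<Rightarrow> ('a \<Rightarrow> bool) \<Rightarrow> ('a \<Rightarrow> bool) \<Rightarrow> bool" where
  "is_fun M f D C \<longleftrightarrow>
     (\<forall>p. M p f \<longrightarrow> (\<exists>a b. is_pair M p a b)) \<and>
     (\<forall>a b b'. ap M f a b \<longrightarrow> ap M f a b' \<longrightarrow> b = b') \<and>
     (\<forall>a b. ap M f a b \<longrightarrow> D a \<and> C b) \<and>
     (\<forall>a. D a \<longrightarrow> (\<exists>b. ap M f a b))"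

definition is_inj :: "('a \<Rightarrow> 'a \<Rightarrow> bool) \<Rightarrow> 'a \<Rightarrow> ('a \<Rightarrow> bool) \<Rightarrow> ('a \<Rightarrow> bool) \<Rightarrow> bool" where
  "is_inj M f D C \<longleftrightarrow> is_fun M f D C \<and>
     (\<forall>a a' b. ap M f a b \<longrightarrow> ap M f a' b \<longrightarrow> a = a')"

definition is_bij :: "('a \<Rightarrow> 'a \<Rightarrow> bool) \<Rightarrow> 'a \<Rightarrow> ('a \<Rightarrow> bool) \<Rightarrow> ('a \<Rightarrow> bool) \<Rightarrow> bool" where
  "is_bij M f D C \<longleftrightarrow> is_inj M f D C \<and> (\<forall>b. C b \<longrightarrow> (\<exists>a. ap M f a b))"

definition fin :: "('a \<Rightarrow> 'a \<Rightarrow> bool) \<Rightarrow> 'a \<Rightarrow> bool" where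
  "fin M x \<longleftrightarrow> (\<exists>w n f. is_omega M w \<and> M n w \<and> is_bij M f (\<lambda>a. M a n) (\<lambda>b. M b x))"

definition fsc :: "('a \<Rightarrow> 'a \<Rightarrow> bool) \<Rightarrow> 'a \<Rightarrow> bool" where
  "fsc M y \<longleftrightarrow> (\<forall>x. fin M x \<longrightarrow> sub M x y \<longrightarrow> M x y)"

definition is_relation :: "('a \<Rightarrow> 'a \<Rightarrow> bool) \<Rightarrow> 'a \<Rightarrow> bool" where
  "is_relation M A \<longleftrightarrow> (\<forall>p. M p A \<longrightarrow> (\<exists>a b. is_pair M p a b))"

definition in_field :: "('a \<Rightarrow> 'a \<Rightarrow> bool) \<Rightarrow> 'a \<Rightarrow> 'a \<Rightarrow> bool" where
  "in_field M A j \<longleftrightarrow> (\<exists>k. ap M A j k \<or> ap M A k j)"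

definition rel_wf :: "('a \<Rightarrow> 'a \<Rightarrow> bool) \<Rightarrow> 'a \<Rightarrow> bool" where
  "rel_wf M A \<longleftrightarrow> (\<forall>s. (\<exists>x. M x s) \<longrightarrow> (\<forall>x. M x s \<longrightarrow> in_field M A x) \<longrightarrow>
       (\<exists>m. M m s \<and> (\<forall>j. M j s \<longrightarrow> \<not> ap M A j m)))"

definition rel_ext :: "('a \<Rightarrow> 'a \<Rightarrow> bool) \<Rightarrow> 'a \<Rightarrow> bool" where
  "rel_ext M A \<longleftrightarrow> (\<forall>j k. in_field M A j \<longrightarrow> in_field M A k \<longrightarrow>
       (\<forall>i. ap M A i j \<longleftrightarrow> ap M A i k) \<longrightarrow> j = k)"

definition Z_FTM_omega :: "('a \<Rightarrow> 'a \<Rightarrow> bool) \<Rightarrow> bool" where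
  "Z_FTM_omega M \<longleftrightarrow>
    \<comment> \<open>Extensionality\<close>
    (\<forall>x y. (\<forall>z. M z x \<longleftrightarrow> M z y) \<longrightarrow> x = y) \<and>
    \<comment> \<open>Pairing\<close>
    (\<forall>a b. \<exists>y. \<forall>z. M z y \<longleftrightarrow> z = a \<or> z = b) \<and>
    \<comment> \<open>Union\<close>
    (\<forall>x. \<exists>y. \<forall>z. M z y \<longleftrightarrow> (\<exists>u. M u x \<and> M z u)) \<and>
    \<comment> \<open>Infinity\<close>
    (\<exists>y. ind_set M y) \<and>
    \<comment> \<open>Regularity (Foundation)\<close>
    (\<forall>x. (\<exists>y. M y x) \<longrightarrow> (\<exists>y. M y x \<and> (\<forall>z. M z y \<longrightarrow> \<not> M z x))) \<and>
    \<comment> \<open>Separation schema, with parameters\<close>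
    (\<forall>\<phi> v e x. \<exists>y. \<forall>z. M z y \<longleftrightarrow> M z x \<and> sat M (e(v := z)) \<phi>) \<and>
    \<comment> \<open>FC\<close>
    (\<forall>X. \<exists>Y. sub M X Y \<and> fsc M Y) \<and>
    \<comment> \<open>TS\<close>
    (\<forall>X. \<exists>Y. sub M X Y \<and> transitive_set M Y) \<and>
    \<comment> \<open>MC (Mostowski collapse)\<close>
    (\<forall>A. is_relation M A \<longrightarrow> rel_wf M A \<longrightarrow> rel_ext M A \<longrightarrow>
       (\<exists>X \<eta>. transitive_set M X \<and> is_bij M \<eta> (in_field M A) (\<lambda>b. M b X) \<and>
          (\<forall>j k a b. ap M \<eta> j a \<longrightarrow> ap M \<eta> k b \<longrightarrow> (ap M A j k \<longleftrightarrow> M a b)))) \<and>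
    \<comment> \<open>Count\<close>
    (\<forall>X. \<exists>w f. is_omega M w \<and> is_inj M f (\<lambda>a. M a X) (\<lambda>b. M b w))"

definition is_PC :: "('a \<Rightarrow> 'a \<Rightarrow> bool) \<Rightarrow> 'a \<Rightarrow> 'a \<Rightarrow> bool" where
  "is_PC M X P \<longleftrightarrow> sub M X P \<and> fsc M P \<and> (\<forall>Y. sub M X Y \<longrightarrow> fsc M Y \<longrightarrow> sub M P Y)"

definition is_TC :: "('a \<Rightarrow> 'a \<Rightarrow> bool) \<Rightarrow> 'a \<Rightarrow> 'a \<Rightarrow> bool" where
  "is_TC M X T \<longleftrightarrow> sub M X T \<and> transitive_set M T \<and>
     (\<forall>Y. sub M X Y \<longrightarrow> transitive_set M Y \<longrightarrow> sub M T Y)"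

end

theory Submission
  imports Defs
begin

text \<open>FC and TS provide some finite-subset closed, resp. transitive, superset Y of X.
Both properties are first-order and preserved under arbitrary intersections, so Separation
cuts Y down to the intersection of all such supersets of X, which is then the least one.\<close>

definition f_all :: "nat \<Rightarrow> fm \<Rightarrow> fm" where "f_all v p = FNeg (FEx v (FNeg p))"
definition f_imp :: "fm \<Rightarrow> fm \<Rightarrow> fm" where "f_imp p q = FNeg (FConj p (FNeg q))"
definition f_disj :: "fm \<Rightarrow> fm \<Rightarrow> fm" where "f_disj p q = FNeg (FConj (FNeg p) (FNeg q))"
definition f_iff :: "fm \<Rightarrow> fm \<Rightarrow> fm" where "f_iff p q = FConj (f_imp p q) (f_imp q p)"

lemma sat_connectives [simp]:
  "sat M e (f_all v p) = (\<forall>x. sat M (e(v := x)) p)"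
  "sat M e (f_imp p q) = (sat M e p \<longrightarrow> sat M e q)"
  "sat M e (f_disj p q) = (sat M e p \<or> sat M e q)"
  "sat M e (f_iff p q) = (sat M e p \<longleftrightarrow> sat M e q)"
  by (auto simp: f_all_def f_imp_def f_disj_def f_iff_def)

text \<open>In the formulas below the last argument k is the first variable index used for bound
variables; the parameters must be variables below k.\<close>

definition f_sub :: "nat \<Rightarrow> nat \<Rightarrow> nat \<Rightarrow> fm" where
  "f_sub a b k = f_all k (f_imp (FMem k a) (FMem k b))"

lemma sat_f_sub [simp]: "a < k \<Longrightarrow> b < k \<Longrightarrow> sat M e (f_sub a b k) = sub M (e a) (e b)"
  by (simp add: f_sub_def sub_def)

definition f_empty :: "nat \<Rightarrow> nat \<Rightarrow> fm" where
  "f_empty a k = f_all k (FNeg (FMem k a))"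

lemma sat_f_empty [simp]: "a < k \<Longrightarrow> sat M e (f_empty a k) = is_empty M (e a)"
  by (simp add: f_empty_def is_empty_def)

definition f_succ :: "nat \<Rightarrow> nat \<Rightarrow> nat \<Rightarrow> fm" where
  "f_succ x s k = f_all k (f_iff (FMem k s) (f_disj (FMem k x) (FEq k x)))"

lemma sat_f_succ [simp]: "x < k \<Longrightarrow> s < k \<Longrightarrow> sat M e (f_succ x s k) = is_succ M (e x) (e s)"
  by (simp add: f_succ_def is_succ_def)

definition f_ind_set :: "nat \<Rightarrow> nat \<Rightarrow> fm" where
  "f_ind_set y k = FConj (FEx k (FConj (f_empty k (k + 1)) (FMem k y)))
     (f_all k (f_all (k + 1) (f_imp (FMem k y) (f_imp (f_succ k (k + 1) (k + 2)) (FMem (k + 1) y)))))"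

lemma sat_f_ind_set [simp]: "y < k \<Longrightarrow> sat M e (f_ind_set y k) = ind_set M (e y)"
  by (simp add: f_ind_set_def ind_set_def)

definition f_omega :: "nat \<Rightarrow> nat \<Rightarrow> fm" where
  "f_omega w k = FConj (f_ind_set w k) (f_all k (f_imp (f_ind_set k (k + 1)) (f_sub w k (k + 1))))"

lemma sat_f_omega [simp]: "w < k \<Longrightarrow> sat M e (f_omega w k) = is_omega M (e w)"
  by (simp add: f_omega_def is_omega_def)

definition f_pair :: "nat \<Rightarrow> nat \<Rightarrow> nat \<Rightarrow> nat \<Rightarrow> fm" where
  "f_pair p a b k = f_all k (f_iff (FMem k p)
     (f_disj (f_all (k + 1) (f_iff (FMem (k + 1) k) (FEq (k + 1) a)))
             (f_all (k + 1) (f_iff (FMem (k + 1) k) (f_disj (FEq (k + 1) a) (FEq (k + 1) b))))))"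

lemma sat_f_pair [simp]:
  "p < k \<Longrightarrow> a < k \<Longrightarrow> b < k \<Longrightarrow> sat M e (f_pair p a b k) = is_pair M (e p) (e a) (e b)"
  by (simp add: f_pair_def is_pair_def)

definition f_ap :: "nat \<Rightarrow> nat \<Rightarrow> nat \<Rightarrow> nat \<Rightarrow> fm" where
  "f_ap f a b k = FEx k (FConj (FMem k f) (f_pair k a b (k + 1)))"

lemma sat_f_ap [simp]:
  "f < k \<Longrightarrow> a < k \<Longrightarrow> b < k \<Longrightarrow> sat M e (f_ap f a b k) = ap M (e f) (e a) (e b)"
  by (simp add: f_ap_def ap_def)

definition f_bij :: "nat \<Rightarrow> nat \<Rightarrow> nat \<Rightarrow> nat \<Rightarrow> fm" where
  "f_bij f n x k =
    FConj (f_all k (f_imp (FMem k f) (FEx (k + 1) (FEx (k + 2) (f_pair k (k + 1) (k + 2) (k + 3))))))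
    (FConj (f_all k (f_all (k + 1) (f_all (k + 2)
       (f_imp (f_ap f k (k + 1) (k + 3)) (f_imp (f_ap f k (k + 2) (k + 3)) (FEq (k + 1) (k + 2)))))))
    (FConj (f_all k (f_all (k + 1) (f_imp (f_ap f k (k + 1) (k + 2)) (FConj (FMem k n) (FMem (k + 1) x)))))
    (FConj (f_all k (f_imp (FMem k n) (FEx (k + 1) (f_ap f k (k + 1) (k + 2)))))
    (FConj (f_all k (f_all (k + 1) (f_all (k + 2)
       (f_imp (f_ap f k (k + 2) (k + 3)) (f_imp (f_ap f (k + 1) (k + 2) (k + 3)) (FEq k (k + 1)))))))
     (f_all k (f_imp (FMem k x) (FEx (k + 1) (f_ap f (k + 1) k (k + 2)))))))))"

lemma sat_f_bij [simp]:
  "f < k \<Longrightarrow> n < k \<Longrightarrow> x < k \<Longrightarrow>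
   sat M e (f_bij f n x k) = is_bij M (e f) (\<lambda>a. M a (e n)) (\<lambda>b. M b (e x))"
  by (simp add: f_bij_def is_bij_def is_inj_def is_fun_def)

definition f_fin :: "nat \<Rightarrow> nat \<Rightarrow> fm" where
  "f_fin x k = FEx k (FEx (k + 1) (FEx (k + 2)
     (FConj (f_omega k (k + 3)) (FConj (FMem (k + 1) k) (f_bij (k + 2) (k + 1) x (k + 3))))))"

lemma sat_f_fin [simp]: "x < k \<Longrightarrow> sat M e (f_fin x k) = fin M (e x)"
  by (simp add: f_fin_def fin_def)

definition f_fsc :: "nat \<Rightarrow> nat \<Rightarrow> fm" where
  "f_fsc y k = f_all k (f_imp (f_fin k (k + 1)) (f_imp (f_sub k y (k + 1)) (FMem k y)))"

lemma sat_f_fsc [simp]: "y < k \<Longrightarrow> sat M e (f_fsc y k) = fsc M (e y)"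
  by (simp add: f_fsc_def fsc_def)

definition f_transitive_set :: "nat \<Rightarrow> nat \<Rightarrow> fm" where
  "f_transitive_set y k = f_all k (f_imp (FMem k y) (f_sub k y (k + 1)))"

lemma sat_f_transitive_set [simp]:
  "y < k \<Longrightarrow> sat M e (f_transitive_set y k) = transitive_set M (e y)"
  by (simp add: f_transitive_set_def transitive_set_def)

text \<open>The defining formula may be placed at any variable v, and its truth depends on v only.\<close>

definition definable :: "('a \<Rightarrow> 'a \<Rightarrow> bool) \<Rightarrow> ('a \<Rightarrow> bool) \<Rightarrow> bool" where
  "definable M Q \<longleftrightarrow> (\<forall>v. \<exists>\<phi>. \<forall>e. sat M e \<phi> \<longleftrightarrow> Q (e v))"

lemma definable_fsc: "definable M (fsc M)"
proof (unfold definable_def, intro allI)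
  fix v show "\<exists>\<phi>. \<forall>e. sat M e \<phi> \<longleftrightarrow> fsc M (e v)"
    by (intro exI[of _ "f_fsc v (Suc v)"]) simp
qed

lemma definable_transitive_set: "definable M (transitive_set M)"
proof (unfold definable_def, intro allI)
  fix v show "\<exists>\<phi>. \<forall>e. sat M e \<phi> \<longleftrightarrow> transitive_set M (e v)"
    by (intro exI[of _ "f_transitive_set v (Suc v)"]) simp
qed

text \<open>S ranges over classes: the supersets intersected below need not form a set.\<close>

definition intersection_closed :: "('a \<Rightarrow> 'a \<Rightarrow> bool) \<Rightarrow> ('a \<Rightarrow> bool) \<Rightarrow> bool" where
  "intersection_closed M Q \<longleftrightarrow>
     (\<forall>S P. (\<forall>Y. S Y \<longrightarrow> Q Y) \<longrightarrow> (\<forall>z. M z P \<longleftrightarrow> (\<forall>Y. S Y \<longrightarrow> M z Y)) \<longrightarrow> Q P)"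

lemma intersection_closed_fsc: "intersection_closed M (fsc M)"
  unfolding intersection_closed_def fsc_def sub_def by blast

lemma intersection_closed_transitive_set: "intersection_closed M (transitive_set M)"
  unfolding intersection_closed_def transitive_set_def sub_def by blast

lemma least_superset_exists:
  assumes separation: "\<forall>\<phi> v e x. \<exists>y. \<forall>z. M z y \<longleftrightarrow> M z x \<and> sat M (e(v := z)) \<phi>"
    and "definable M Q" and "intersection_closed M Q"
    and "sub M X Y" and "Q Y"
  shows "\<exists>P. sub M X P \<and> Q P \<and> (\<forall>Y'. sub M X Y' \<longrightarrow> Q Y' \<longrightarrow> sub M P Y')"
proof -
  obtain \<phi> where \<phi>: "\<And>e. sat M e \<phi> \<longleftrightarrow> Q (e 2)"
    using \<open>definable M Q\<close> unfolding definable_def by blast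
  \<comment> \<open>variable 0 is the element z, 1 the parameter X, 2 the superset Y'\<close>
  let ?\<psi> = "f_all 2 (f_imp (f_sub 1 2 3) (f_imp \<phi> (FMem 0 2)))"
  obtain P where "\<forall>z. M z P \<longleftrightarrow> M z Y \<and> sat M ((\<lambda>_. X)(0 := z)) ?\<psi>"
    using separation[rule_format, where \<phi> = ?\<psi> and v = 0 and e = "\<lambda>_. X" and x = Y] by blast
  then have "\<forall>z. M z P \<longleftrightarrow> M z Y \<and> (\<forall>Y'. sub M X Y' \<longrightarrow> Q Y' \<longrightarrow> M z Y')"
    by (simp add: \<phi>)
  with \<open>sub M X Y\<close> \<open>Q Y\<close> have P: "\<forall>z. M z P \<longleftrightarrow> (\<forall>Y'. sub M X Y' \<and> Q Y' \<longrightarrow> M z Y')"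
    unfolding sub_def by blast
  have "Q P"
    using \<open>intersection_closed M Q\<close>[unfolded intersection_closed_def, rule_format,
        of "\<lambda>Y'. sub M X Y' \<and> Q Y'" P] P
    by blast
  moreover have "sub M X P" and "\<forall>Y'. sub M X Y' \<longrightarrow> Q Y' \<longrightarrow> sub M P Y'"
    using P unfolding sub_def by blast+
  ultimately show ?thesis by blast
qed

theorem lemma9p1:
  fixes M :: "'a \<Rightarrow> 'a \<Rightarrow> bool"
  assumes "Z_FTM_omega M"
  shows "\<forall>X. (\<exists>P. is_PC M X P) \<and> (\<exists>T. is_TC M X T)"
proof
  fix X
  have separation: "\<forall>\<phi> v e x. \<exists>y. \<forall>z. M z y \<longleftrightarrow> M z x \<and> sat M (e(v := z)) \<phi>"
    and FC: "\<exists>Y. sub M X Y \<and> fsc M Y"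
    and TS: "\<exists>Y. sub M X Y \<and> transitive_set M Y"
    using assms unfolding Z_FTM_omega_def by blast+
  from FC have "\<exists>P. is_PC M X P"
    unfolding is_PC_def
    using least_superset_exists[OF separation definable_fsc intersection_closed_fsc] by blast
  moreover from TS have "\<exists>T. is_TC M X T"
    unfolding is_TC_def
    using least_superset_exists[OF separation definable_transitive_set
        intersection_closed_transitive_set] by blast
  ultimately show "(\<exists>P. is_PC M X P) \<and> (\<exists>T. is_TC M X T)" ..
qed

end
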